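(* Let $(S,+)$ be an infinite left weakly cancellative semigroup with no idempotent element, and let $A\subseteq S$ be an IP set. Then there is a family $\{A_\alpha:\alpha<2^\omega\}$ of subsets of $A$ such that each $A_\alpha$ is an infinite IP set and $A_\alpha\cap A_\beta$ is finite whenever $\alpha<\beta<2^\omega$.
   Context: $S$ is left weakly cancellative if for all $a,b\in S$ the set $\{x: a+x=b\}$ is finite; $e$ is idempotent if $e+e=e$. For a sequence $\langle x_n\rangle_{n=1}^\infty$ in $S$, $\mathrm{FS}(\langle x_n\rangle_{n=1}^\infty)$ is the set of all sums $\sum_{n\in H}x_n$ (in increasing order of indices) with $H$ a nonempty finite subset of $\mathbb{N}$. $A$ is an IP set if $\mathrm{FS}(\langle x_n\rangle_{n=1}^\infty)\subseteq A$ for some sequence $\langle x_n\rangle_{n=1}^\infty$ in $S$. *)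

theory Defs
  imports Main
begin

fun lsum :: "'a::semigroup_add list \<Rightarrow> 'a" where
  "lsum [] = undefined"
| "lsum [x] = x"
| "lsum (x # y # xs) = x + lsum (y # xs)"

definition fsum :: "(nat \<Rightarrow> 'a::semigroup_add) \<Rightarrow> nat set \<Rightarrow> 'a" where
  "fsum x H = lsum (map x (sorted_list_of_set H))"

definition FS :: "(nat \<Rightarrow> 'a::semigroup_add) \<Rightarrow> 'a set" where
  "FS x = {fsum x H | H. finite H \<and> H \<noteq> {}}"

definition IP_set :: "'a::semigroup_add set \<Rightarrow> bool" where
  "IP_set A \<longleftrightarrow> (\<exists>x. FS x \<subseteq> A)"

definition left_weakly_cancellative :: "'a::semigroup_add itself \<Rightarrow> bool" where
  "left_weakly_cancellative _ \<longleftrightarrow> (\<forall>a b :: 'a. finite {x. a + x = b})"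

end

theory Submission
  imports Defs "HOL-Library.Nat_Bijection"
begin

text \<open>Without idempotents the positive multiples of an
  element are pairwise distinct, so by pigeonhole the finite sums of \<open>x\<close> beyond any index
  escape every finite set. Left weak cancellativity makes \<open>{t. \<exists>s\<in>P. s + t \<in> P}\<close> finite
  for finite \<open>P\<close>; hence one can choose blocks \<open>H\<^sub>0 < H\<^sub>1 < \<dots>\<close> such that
  \<open>y\<^sub>n = fsum x H\<^sub>n\<close> is neither a finite sum \<open>s\<close> of \<open>y\<^sub>0, \<dots>, y\<^sub>n\<^sub>-\<^sub>1\<close>
  nor a solution of \<open>s + t = s'\<close> for two such sums. Then \<open>FS y \<subseteq> FS x\<close>, and every finite
  sum of \<open>y\<close> determines the largest index it uses.

  Now index \<open>y\<close> by the nodes of the binary tree and take, for each of the \<open>2\<^sup>\<omega>\<close>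
  branches, the finite sums along that branch. Two distinct branches share only the nodes
  above their first split, and a common finite sum must end in a common node, so it only
  involves nodes above the split: there are finitely many such sums.\<close>

lemma lsum_append:
  "xs \<noteq> [] \<Longrightarrow> ys \<noteq> [] \<Longrightarrow> lsum (xs @ ys) = lsum xs + lsum ys"
proof (induction xs rule: lsum.induct)
  case (2 x)
  then show ?case by (cases ys) auto
qed (simp_all add: add.assoc)

lemma sorted_list_of_set_Un_less:
  fixes H K :: "nat set"
  assumes "finite H" "finite K" "\<forall>h\<in>H. \<forall>k\<in>K. h < k"
  shows "sorted_list_of_set (H \<union> K) = sorted_list_of_set H @ sorted_list_of_set K"
  using assms by (intro sorted_distinct_set_unique) (auto simp: sorted_append less_imp_le)

lemma fsum_Un_less:
  assumes "finite H" "finite K" "H \<noteq> {}" "K \<noteq> {}" "\<forall>h\<in>H. \<forall>k\<in>K. h < k"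
  shows "fsum x (H \<union> K) = fsum x H + fsum x K"
  using assms by (simp add: fsum_def sorted_list_of_set_Un_less lsum_append)

lemma fsum_singleton [simp]: "fsum x {n} = x n"
  by (simp add: fsum_def)

lemma fsum_cong: "finite K \<Longrightarrow> (\<And>i. i \<in> K \<Longrightarrow> x i = x' i) \<Longrightarrow> fsum x K = fsum x' K"
  unfolding fsum_def by (intro arg_cong [where f = lsum] map_cong) auto

lemma sorted_list_of_set_image_strict_mono:
  fixes g :: "nat \<Rightarrow> nat"
  assumes "strict_mono g" "finite K"
  shows "sorted_list_of_set (g ` K) = map g (sorted_list_of_set K)"
proof (rule sorted_distinct_set_unique)
  show "sorted (map g (sorted_list_of_set K))"
    using assms(1) by (simp add: sorted_map strict_mono_less_eq)
  show "distinct (map g (sorted_list_of_set K))"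
    using assms by (simp add: distinct_map strict_mono_imp_inj_on inj_on_subset)
qed (use assms in auto)

lemma fsum_image_strict_mono:
  "strict_mono g \<Longrightarrow> finite K \<Longrightarrow> fsum x (g ` K) = fsum (x \<circ> g) K"
  by (simp add: fsum_def sorted_list_of_set_image_strict_mono)

lemma FS_comp_strict_mono_subset:
  assumes "strict_mono g"
  shows "FS (x \<circ> g) \<subseteq> FS x"
proof
  fix t assume "t \<in> FS (x \<circ> g)"
  then obtain K where K: "finite K" "K \<noteq> {}" "t = fsum (x \<circ> g) K"
    unfolding FS_def by blast
  then have "t = fsum x (g ` K)" using fsum_image_strict_mono [OF assms K(1), of x] by simp
  then show "t \<in> FS x" unfolding FS_def using K by blast
qed

text \<open>The semigroup has no zero, so we index the positive multiples from 0:
  \<open>multiple n v\<close> is the sum of \<open>n + 1\<close> copies of \<open>v\<close>.\<close>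
primrec multiple :: "nat \<Rightarrow> 'a::semigroup_add \<Rightarrow> 'a" where
  "multiple 0 v = v"
| "multiple (Suc n) v = v + multiple n v"

lemma multiple_add: "multiple (Suc (m + n)) v = multiple m v + multiple n v"
  by (induction m) (simp_all add: add.assoc)

lemma multiple_eq_imp_idempotent:
  fixes v :: "'a::semigroup_add"
  assumes eq: "multiple i v = multiple j v" and "i < j"
  shows "\<exists>e::'a. e + e = e"
proof -
  define k where "k = j - i"
  have shift: "multiple (l + k) v = multiple l v" if "i \<le> l" for l
    using that by (induction l rule: dec_induct) (use eq \<open>i < j\<close> in \<open>simp_all add: k_def\<close>)
  have period: "multiple (l + q * k) v = multiple l v" if "i \<le> l" for l q
  proof (induction q)
    case (Suc q)
    have "multiple (l + Suc q * k) v = multiple (l + q * k + k) v" by (simp add: add_ac)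
    also have "\<dots> = multiple l v" using shift [of "l + q * k"] that Suc by simp
    finally show ?case .
  qed simp
  \<comment> \<open>Take \<open>n \<ge> i\<close> with \<open>k\<close> dividing \<open>n + 1\<close>; then \<open>n + n + 1\<close> and \<open>n\<close> differ by a multiple of the period.\<close>
  define n where "n = Suc i * k - 1"
  have "1 \<le> k" using \<open>i < j\<close> by (simp add: k_def)
  then have "Suc i \<le> Suc i * k" using mult_le_mono2 [of 1 k "Suc i"] by simp
  then have n: "i \<le> n" "Suc (n + n) = n + Suc i * k" by (auto simp: n_def)
  have "multiple n v + multiple n v = multiple n v"
    using multiple_add [of n n v] period [OF n(1), of "Suc i"] n(2) by simp
  then show ?thesis by blast
qed

lemma infinite_multiples:
  assumes "\<forall>e::'a::semigroup_add. e + e \<noteq> e"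
  shows "infinite (range (\<lambda>n. multiple n (v::'a)))"
proof
  assume "finite (range (\<lambda>n. multiple n v))"
  then obtain i j where "i \<noteq> j" "multiple i v = multiple j v"
    using finite_imageD [of _ UNIV] unfolding inj_def by blast
  then show False
    using assms multiple_eq_imp_idempotent by (metis linorder_neqE_nat)
qed

lemma fsum_const:
  assumes "finite H" "H \<noteq> {}" "\<And>h. h \<in> H \<Longrightarrow> x h = v"
  shows "fsum x H = multiple (card H - 1) v"
proof -
  have "map x (sorted_list_of_set H) = map (\<lambda>_. v) (sorted_list_of_set H)"
    using assms(1,3) by (intro map_cong) auto
  then have "map x (sorted_list_of_set H) = replicate (card H) v"
    by (simp add: map_replicate_const)
  moreover have "lsum (replicate (Suc n) v) = multiple n v" for n
    by (induction n) simp_all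
  moreover have "card H = Suc (card H - 1)" using assms by (simp add: card_gt_0_iff)
  ultimately show ?thesis unfolding fsum_def by metis
qed

lemma fsum_escapes_finite:
  fixes x :: "nat \<Rightarrow> 'a::semigroup_add"
  assumes no_idem: "\<forall>e::'a. e + e \<noteq> e" and "finite Z"
  shows "\<exists>H. finite H \<and> H \<noteq> {} \<and> (\<forall>h\<in>H. m \<le> h) \<and> fsum x H \<notin> Z"
proof (rule ccontr)
  assume "\<not> ?thesis"
  then have in_Z: "fsum x H \<in> Z" if "finite H" "H \<noteq> {}" "\<forall>h\<in>H. m \<le> h" for H
    using that by blast
  have "x ` {m..} \<subseteq> Z" using in_Z [of "{_}"] by auto
  then have "finite (x ` {m..})" using \<open>finite Z\<close> finite_subset by blast
  then obtain n0 where "n0 \<ge> m" and inf: "infinite {n \<in> {m..}. x n = x n0}"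
    using pigeonhole_infinite [OF infinite_Ici] by blast
  have "multiple j (x n0) \<in> Z" for j
  proof -
    obtain H where H: "finite H" "card H = Suc j" "H \<subseteq> {n \<in> {m..}. x n = x n0}"
      using infinite_arbitrarily_large [OF inf] by blast
    then have "H \<noteq> {}" by auto
    then have "fsum x H = multiple j (x n0)" using H by (subst fsum_const) auto
    with in_Z [of H] H \<open>H \<noteq> {}\<close> show ?thesis by auto
  qed
  then have "finite (range (\<lambda>j. multiple j (x n0)))"
    using \<open>finite Z\<close> finite_subset by (metis image_subsetI)
  with infinite_multiples [OF no_idem] show False by blast
qed

lemma FS_infinite:
  assumes "\<forall>e::'a::semigroup_add. e + e \<noteq> e"
  shows "infinite (FS (x :: nat \<Rightarrow> 'a))"
  using fsum_escapes_finite [OF assms, of "FS x" 0 x] unfolding FS_def by blast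

definition FS_prefix :: "(nat \<Rightarrow> 'a::semigroup_add) \<Rightarrow> nat \<Rightarrow> 'a set" where
  "FS_prefix y n = fsum y ` {K. K \<subseteq> {..<n} \<and> K \<noteq> {}}"

lemma finite_FS_prefix: "finite (FS_prefix y n)"
  unfolding FS_prefix_def by (rule finite_imageI) (use finite_subset in auto)

lemma FS_prefix_cong:
  "(\<And>k. k < n \<Longrightarrow> y k = y' k) \<Longrightarrow> FS_prefix y n = FS_prefix y' n"
  unfolding FS_prefix_def by (intro image_cong refl fsum_cong) (auto intro: finite_subset)

definition sums_determine_Max :: "(nat \<Rightarrow> 'a::semigroup_add) \<Rightarrow> bool" where
  "sums_determine_Max y \<longleftrightarrow> (\<forall>H K. finite H \<longrightarrow> H \<noteq> {} \<longrightarrow> finite K \<longrightarrow> K \<noteq> {} \<longrightarrow>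
     fsum y H = fsum y K \<longrightarrow> Max H = Max K)"

lemma sums_determine_MaxD:
  "sums_determine_Max y \<Longrightarrow> finite H \<Longrightarrow> H \<noteq> {} \<Longrightarrow> finite K \<Longrightarrow> K \<noteq> {} \<Longrightarrow>
    fsum y H = fsum y K \<Longrightarrow> Max H = Max K"
  unfolding sums_determine_Max_def by blast

lemma sums_determine_MaxI:
  assumes new: "\<And>n. y n \<notin> FS_prefix y n"
    and new_right: "\<And>n s. s \<in> FS_prefix y n \<Longrightarrow> s + y n \<notin> FS_prefix y n"
  shows "sums_determine_Max y"
proof -
  have False if "fsum y H = fsum y K" "Max K < Max H"
    and H: "finite H" "H \<noteq> {}" and K: "finite K" "K \<noteq> {}" for H K
  proof -
    define n where "n = Max H"
    have "K \<subseteq> {..<n}" using K \<open>Max K < Max H\<close> by (auto simp: n_def)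
    then have K_prefix: "fsum y K \<in> FS_prefix y n" using K by (auto simp: FS_prefix_def)
    show False
    proof (cases "H = {n}")
      case True
      then show False using new [of n] K_prefix \<open>fsum y H = fsum y K\<close> by simp
    next
      case False
      define H' where "H' = H - {n}"
      have "n \<in> H" using H by (simp add: n_def)
      then have H_split: "H = H' \<union> {n}" and "H' \<noteq> {}" using False by (auto simp: H'_def)
      have "H' \<subseteq> {..<n}" using H by (auto simp: H'_def n_def order.not_eq_order_implies_strict)
      then have "fsum y H' \<in> FS_prefix y n" using \<open>H' \<noteq> {}\<close> by (auto simp: FS_prefix_def)
      moreover have "fsum y H = fsum y H' + y n"
        using H_split H \<open>H' \<noteq> {}\<close> \<open>H' \<subseteq> {..<n}\<close> by (subst H_split, subst fsum_Un_less) auto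
      ultimately show False using new_right K_prefix \<open>fsum y H = fsum y K\<close> by metis
    qed
  qed
  then show ?thesis unfolding sums_determine_Max_def by (metis linorder_neqE_nat)
qed

lemma fsum_blocks:
  assumes blocks: "\<And>i. finite (H i)" "\<And>i. H i \<noteq> {}"
    and ordered: "\<And>i j a b. i < j \<Longrightarrow> a \<in> H i \<Longrightarrow> b \<in> H j \<Longrightarrow> a < b"
    and "finite K" "K \<noteq> {}"
  shows "fsum (\<lambda>i. fsum x (H i)) K = fsum x (\<Union>i\<in>K. H i)"
  using \<open>finite K\<close> \<open>K \<noteq> {}\<close>
proof (induction K rule: finite_linorder_max_induct)
  case (insert b K)
  show ?case
  proof (cases "K = {}")
    case False
    have "fsum (\<lambda>i. fsum x (H i)) (K \<union> {b}) = fsum x (\<Union>i\<in>K. H i) + fsum x (H b)"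
      using insert False by (subst fsum_Un_less) auto
    also have "\<dots> = fsum x ((\<Union>i\<in>K. H i) \<union> H b)"
      using insert False blocks ordered by (subst fsum_Un_less) auto
    finally show ?thesis by (simp add: Un_commute)
  qed simp
qed simp

lemma FS_blocks_subset:
  assumes "\<And>i. finite (H i)" "\<And>i. H i \<noteq> {}"
    and "\<And>i j a b. i < j \<Longrightarrow> a \<in> H i \<Longrightarrow> b \<in> H j \<Longrightarrow> a < b"
  shows "FS (\<lambda>i. fsum x (H i)) \<subseteq> FS x"
proof
  fix t assume "t \<in> FS (\<lambda>i. fsum x (H i))"
  then obtain K where K: "finite K" "K \<noteq> {}" "t = fsum (\<lambda>i. fsum x (H i)) K"
    unfolding FS_def by blast
  then have "t = fsum x (\<Union>i\<in>K. H i)" using fsum_blocks [OF assms] by simp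
  moreover have "finite (\<Union>i\<in>K. H i)" "(\<Union>i\<in>K. H i) \<noteq> {}" using K assms(1,2) by auto
  ultimately show "t \<in> FS x" unfolding FS_def by blast
qed

lemma finite_left_solutions:
  assumes "left_weakly_cancellative TYPE('a::semigroup_add)" "finite P"
  shows "finite {t::'a. \<exists>s\<in>P. s + t \<in> P}"
proof -
  have "{t. \<exists>s\<in>P. s + t \<in> P} = (\<Union>s\<in>P. \<Union>s'\<in>P. {t. s + t = s'})" by blast
  then show ?thesis using assms unfolding left_weakly_cancellative_def by simp
qed

lemma sum_subsystem_determining_Max:
  fixes x :: "nat \<Rightarrow> 'a::semigroup_add"
  assumes no_idem: "\<forall>e::'a. e + e \<noteq> e" and lwc: "left_weakly_cancellative TYPE('a)"
  shows "\<exists>y. FS y \<subseteq> FS x \<and> sums_determine_Max y"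
proof -
  define avoided :: "(nat \<Rightarrow> 'a) \<Rightarrow> nat \<Rightarrow> 'a set" where
    "avoided y n = FS_prefix y n \<union> {t. \<exists>s\<in>FS_prefix y n. s + t \<in> FS_prefix y n}" for y n
  define admissible where
    "admissible H n B \<longleftrightarrow> finite B \<and> B \<noteq> {} \<and> (\<forall>k<n. \<forall>a\<in>H k. \<forall>b\<in>B. a < b)
       \<and> fsum x B \<notin> avoided (\<lambda>i. fsum x (H i)) n" for H :: "nat \<Rightarrow> nat set" and n B
  have "\<exists>H. \<forall>n. admissible H n (H n)"
  proof (rule dependent_wellorder_choice)
    show "admissible H n B = admissible H' n B" if "\<And>k. k < n \<Longrightarrow> H k = H' k" for B H H' n
      using that FS_prefix_cong [of n "\<lambda>i. fsum x (H i)" "\<lambda>i. fsum x (H' i)"]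
      by (simp add: admissible_def avoided_def)
    show "\<exists>B. admissible H n B" if "\<And>k. k < n \<Longrightarrow> admissible H k (H k)" for H n
    proof -
      have "finite (\<Union>k<n. H k)" using that by (auto simp: admissible_def)
      then obtain m where m: "\<forall>a\<in>(\<Union>k<n. H k). a < m" using finite_nat_set_iff_bounded by blast
      have "finite (avoided (\<lambda>i. fsum x (H i)) n)"
        using finite_left_solutions [OF lwc finite_FS_prefix] by (simp add: avoided_def finite_FS_prefix)
      from fsum_escapes_finite [OF no_idem this, of m x] obtain B where
        B: "finite B" "B \<noteq> {}" "\<forall>b\<in>B. m \<le> b" "fsum x B \<notin> avoided (\<lambda>i. fsum x (H i)) n"
        by blast
      have "\<forall>k<n. \<forall>a\<in>H k. \<forall>b\<in>B. a < b" using m B(3) by (meson UN_I lessThan_iff less_le_trans)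
      with B show ?thesis unfolding admissible_def by blast
    qed
  qed
  then obtain H where H: "\<And>n. admissible H n (H n)" by blast
  define y where "y = (\<lambda>i. fsum x (H i))"
  have "FS y \<subseteq> FS x"
    unfolding y_def by (rule FS_blocks_subset) (use H in \<open>auto simp: admissible_def\<close>)
  moreover have "sums_determine_Max y"
  proof (rule sums_determine_MaxI)
    show "y n \<notin> FS_prefix y n" "s \<in> FS_prefix y n \<Longrightarrow> s + y n \<notin> FS_prefix y n" for n s
      using H [of n] unfolding admissible_def avoided_def y_def by auto
  qed
  ultimately show ?thesis by blast
qed

text \<open>The nodes of depth \<open>n\<close> of the binary tree are numbered by \<open>[2\<^sup>n, 2\<^sup>n\<^sup>+\<^sup>1)\<close>;
  \<open>branch_code \<alpha> n\<close> is the node of depth \<open>n\<close> on the branch \<open>\<alpha>\<close>.\<close>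
definition branch_code :: "nat set \<Rightarrow> nat \<Rightarrow> nat" where
  "branch_code \<alpha> n = set_encode (insert n (\<alpha> \<inter> {..<n}))"

lemma branch_code_bounds: "2 ^ n \<le> branch_code \<alpha> n" "branch_code \<alpha> n < 2 ^ Suc n"
proof -
  have "set_encode (\<alpha> \<inter> {..<n}) \<le> (\<Sum>i<n. 2 ^ i)"
    unfolding set_encode_def by (rule sum_mono2) auto
  also have "\<dots> < 2 ^ n" using sum_power2 [of n] by (simp add: atLeast0LessThan)
  finally show "2 ^ n \<le> branch_code \<alpha> n" "branch_code \<alpha> n < 2 ^ Suc n"
    by (simp_all add: branch_code_def)
qed

lemma strict_mono_branch_code: "strict_mono (branch_code \<alpha>)"
  unfolding strict_mono_Suc_iff using branch_code_bounds less_le_trans by blast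

lemma branch_code_eqD:
  assumes "branch_code \<alpha> n = branch_code \<beta> m"
  shows "n = m" "\<alpha> \<inter> {..<n} = \<beta> \<inter> {..<n}"
proof -
  have eq: "insert n (\<alpha> \<inter> {..<n}) = insert m (\<beta> \<inter> {..<m})"
    using assms unfolding branch_code_def by (subst (asm) set_encode_eq) auto
  then show "n = m" by (metis Int_iff insert_iff lessThan_iff less_asym)
  have "insert n (\<alpha> \<inter> {..<n}) - {n} = \<alpha> \<inter> {..<n}" "insert n (\<beta> \<inter> {..<n}) - {n} = \<beta> \<inter> {..<n}"
    by auto
  with eq \<open>n = m\<close> show "\<alpha> \<inter> {..<n} = \<beta> \<inter> {..<n}" by metis
qed

lemma FS_branches_almost_disjoint:
  assumes "sums_determine_Max y" "\<alpha> \<noteq> \<beta>"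
  shows "finite (FS (y \<circ> branch_code \<alpha>) \<inter> FS (y \<circ> branch_code \<beta>))"
proof -
  obtain d where d: "(d \<in> \<alpha>) \<noteq> (d \<in> \<beta>)" using assms(2) by blast
  have "FS (y \<circ> branch_code \<alpha>) \<inter> FS (y \<circ> branch_code \<beta>) \<subseteq> fsum (y \<circ> branch_code \<alpha>) ` Pow {..d}"
  proof
    fix t assume "t \<in> FS (y \<circ> branch_code \<alpha>) \<inter> FS (y \<circ> branch_code \<beta>)"
    then obtain K K' where K: "finite K" "K \<noteq> {}" "t = fsum (y \<circ> branch_code \<alpha>) K"
      and K': "finite K'" "K' \<noteq> {}" "t = fsum (y \<circ> branch_code \<beta>) K'"
      unfolding FS_def by blast
    have "fsum y (branch_code \<alpha> ` K) = fsum y (branch_code \<beta> ` K')"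
      using K K' by (simp add: fsum_image_strict_mono strict_mono_branch_code)
    then have "Max (branch_code \<alpha> ` K) = Max (branch_code \<beta> ` K')"
      using assms(1) K(1,2) K'(1,2) by (intro sums_determine_MaxD) auto
    moreover have "mono (branch_code \<gamma>)" for \<gamma>
      by (rule strict_mono_mono [OF strict_mono_branch_code])
    ultimately have "branch_code \<alpha> (Max K) = branch_code \<beta> (Max K')"
      using mono_Max_commute [OF _ K(1,2)] mono_Max_commute [OF _ K'(1,2)] by metis
    then have agree: "\<alpha> \<inter> {..<Max K} = \<beta> \<inter> {..<Max K}" by (rule branch_code_eqD)
    have "Max K \<le> d"
    proof (rule ccontr)
      assume "\<not> Max K \<le> d"
      then have "d \<in> {..<Max K}" by simp
      with agree d show False by blast
    qed
    then have "K \<subseteq> {..d}" using Max_ge [OF K(1)] by (meson atMost_iff order_trans subsetI)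
    then show "t \<in> fsum (y \<circ> branch_code \<alpha>) ` Pow {..d}" using K by blast
  qed
  then show ?thesis by (rule finite_subset) simp
qed

theorem theorem2p5:
  fixes A :: "'a::semigroup_add set"
  assumes "infinite (UNIV :: 'a set)"
    and "left_weakly_cancellative TYPE('a)"
    and "\<forall>e :: 'a. e + e \<noteq> e"
    and "A \<subseteq> UNIV" and "IP_set A"
  shows "\<exists>F :: nat set \<Rightarrow> 'a set.
           (\<forall>\<alpha>. F \<alpha> \<subseteq> A \<and> infinite (F \<alpha>) \<and> IP_set (F \<alpha>)) \<and>
           (\<forall>\<alpha> \<beta>. \<alpha> \<noteq> \<beta> \<longrightarrow> finite (F \<alpha> \<inter> F \<beta>))"
proof -
  obtain x where "FS x \<subseteq> A" using \<open>IP_set A\<close> unfolding IP_set_def by blast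
  obtain y where "FS y \<subseteq> FS x" "sums_determine_Max y"
    using sum_subsystem_determining_Max [OF assms(3,2)] by blast
  define F where "F \<alpha> = FS (y \<circ> branch_code \<alpha>)" for \<alpha>
  have "F \<alpha> \<subseteq> A" for \<alpha>
    using FS_comp_strict_mono_subset [OF strict_mono_branch_code] \<open>FS y \<subseteq> FS x\<close> \<open>FS x \<subseteq> A\<close>
    unfolding F_def by blast
  moreover have "infinite (F \<alpha>)" "IP_set (F \<alpha>)" for \<alpha>
    unfolding F_def IP_set_def using FS_infinite [OF assms(3)] by blast+
  moreover have "finite (F \<alpha> \<inter> F \<beta>)" if "\<alpha> \<noteq> \<beta>" for \<alpha> \<beta>
    unfolding F_def using FS_branches_almost_disjoint \<open>sums_determine_Max y\<close> that by blast
  ultimately show ?thesis by blast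
qed

end
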